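(* Let $(G,o)$ be a strong orientation of a cubic graph $G$. Let $e_1=u_1v_1$ and $e_2=u_2v_2$ be two non-adjacent edges of $G$ oriented $u_1\to v_1$ and $u_2\to v_2$ in $(G,o)$, and assume both $e_1$ and $e_2$ are deletable in $(G,o)$. Let $G'$ be the cubic graph obtained from $G$ by subdividing $e_1$ with a new vertex $x_1$, subdividing $e_2$ with a new vertex $x_2$, and adding the edge $x_1x_2$. Let $(G',o')$ be the orientation of $G'$ with $u_1\to x_1$, $x_1\to v_1$, $x_1\to x_2$, $u_2\to x_2$, $x_2\to v_2$, and $o'(e)=o(e)$ for every other edge $e$ of $G'$. Then $(G',o')$ is a strong orientation and $$D(G',o')\supseteq \bigl(D(G,o)\setminus\{e_1,e_2\}\bigr)\cup\{x_1v_1,\;x_1x_2,\;u_2x_2\}.$$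
   Context: An orientation is strong if for every ordered pair of distinct vertices $u,v$ there is a directed $uv$-path. An edge $e$ is deletable in an orientation $(G,o)$ if the restriction of $o$ to $E(G)\setminus\{e\}$ is a strong orientation of $G-e$. $D(G,o)$ denotes the set of edges deletable in $(G,o)$. *)

theory Defs
  imports Main
begin

definition simple_graph :: "'a set \<Rightarrow> 'a set set \<Rightarrow> bool" where
  "simple_graph V E \<longleftrightarrow> finite V \<and> (\<forall>e\<in>E. \<exists>u v. u \<in> V \<and> v \<in> V \<and> u \<noteq> v \<and> e = {u, v})"

definition degree :: "'a set set \<Rightarrow> 'a \<Rightarrow> nat" where
  "degree E v = card {e \<in> E. v \<in> e}"

definition cubic_graph :: "'a set \<Rightarrow> 'a set set \<Rightarrow> bool" where
  "cubic_graph V E \<longleftrightarrow> simple_graph V E \<and> (\<forall>v\<in>V. degree E v = 3)"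

definition orientation :: "'a set \<Rightarrow> 'a set set \<Rightarrow> ('a \<times> 'a) set \<Rightarrow> bool" where
  "orientation V E A \<longleftrightarrow> A \<subseteq> V \<times> V \<and> (\<forall>(u, v)\<in>A. {u, v} \<in> E)
     \<and> (\<forall>e\<in>E. \<exists>!p. p \<in> A \<and> {fst p, snd p} = e)"

definition strong_orientation :: "'a set \<Rightarrow> 'a set set \<Rightarrow> ('a \<times> 'a) set \<Rightarrow> bool" where
  "strong_orientation V E A \<longleftrightarrow> orientation V E A
     \<and> (\<forall>u\<in>V. \<forall>v\<in>V. u \<noteq> v \<longrightarrow> (u, v) \<in> A\<^sup>+)"

definition restrict_orient :: "('a \<times> 'a) set \<Rightarrow> 'a set \<Rightarrow> ('a \<times> 'a) set" where
  "restrict_orient A e = {(u, v) \<in> A. {u, v} \<noteq> e}"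

definition deletable :: "'a set \<Rightarrow> 'a set set \<Rightarrow> ('a \<times> 'a) set \<Rightarrow> 'a set \<Rightarrow> bool" where
  "deletable V E A e \<longleftrightarrow> e \<in> E \<and> strong_orientation V (E - {e}) (restrict_orient A e)"

definition deletable_set :: "'a set \<Rightarrow> 'a set set \<Rightarrow> ('a \<times> 'a) set \<Rightarrow> 'a set set" where
  "deletable_set V E A = {e \<in> E. deletable V E A e}"

end

theory Submission
  imports Defs
begin

text \<open>Each subdivided arc \<open>u\<^sub>i \<rightarrow> v\<^sub>i\<close> is replaced by the detour
  \<open>u\<^sub>i \<rightarrow> x\<^sub>i \<rightarrow> v\<^sub>i\<close> and every other arc survives, so directed paths between old
  vertices carry over from \<open>(G,o)\<close>, or from \<open>(G,o)\<close> minus a deletable edge, to \<open>G'\<close>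
  minus the corresponding edge. It then suffices that each of \<open>x\<^sub>1, x\<^sub>2\<close> can still be
  entered from and left towards old vertices. Deleting \<open>x\<^sub>1x\<^sub>2\<close> keeps both detours;
  deleting \<open>x\<^sub>1v\<^sub>1\<close> breaks the detour of \<open>u\<^sub>1v\<^sub>1\<close>, which is harmless because
  \<open>u\<^sub>1v\<^sub>1\<close> is deletable in \<open>G\<close>, and \<open>x\<^sub>1\<close> is then left via \<open>x\<^sub>1 \<rightarrow> x\<^sub>2 \<rightarrow> v\<^sub>2\<close>;
  deleting \<open>u\<^sub>2x\<^sub>2\<close> is symmetric, \<open>x\<^sub>2\<close> being entered via \<open>u\<^sub>1 \<rightarrow> x\<^sub>1 \<rightarrow> x\<^sub>2\<close>.\<close>

definition strongly_connected :: "'a set \<Rightarrow> ('a \<times> 'a) set \<Rightarrow> bool" where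
  "strongly_connected V R \<longleftrightarrow> (\<forall>u\<in>V. \<forall>v\<in>V. u \<noteq> v \<longrightarrow> (u, v) \<in> R\<^sup>+)"

lemma strongly_connected_iff_rtrancl:
  "strongly_connected V R \<longleftrightarrow> (\<forall>u\<in>V. \<forall>v\<in>V. (u, v) \<in> R\<^sup>*)"
  unfolding strongly_connected_def by (auto simp: rtrancl_eq_or_trancl)

lemma strong_orientation_iff:
  "strong_orientation V E A \<longleftrightarrow> orientation V E A \<and> strongly_connected V A"
  unfolding strong_orientation_def strongly_connected_def ..

lemma strongly_connected_mono:
  assumes "strongly_connected V B" and "B \<subseteq> S\<^sup>+"
  shows "strongly_connected V S"
proof -
  have "B\<^sup>* \<subseteq> S\<^sup>*"
    using assms(2) by (intro rtrancl_subset_rtrancl) auto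
  with assms(1) show ?thesis
    unfolding strongly_connected_iff_rtrancl by blast
qed

lemma subset_trancl_by_detours:
  assumes "\<And>p. p \<in> B \<Longrightarrow> p \<notin> D \<Longrightarrow> p \<in> S" and "D \<subseteq> S\<^sup>+"
  shows "B \<subseteq> S\<^sup>+"
  using assms by auto

lemma strongly_connected_insert:
  assumes conn: "strongly_connected V S"
    and into: "a \<in> V" "(a, x) \<in> S\<^sup>+" and out_of: "b \<in> V" "(x, b) \<in> S\<^sup>+"
  shows "strongly_connected (insert x V) S"
  unfolding strongly_connected_iff_rtrancl
proof (intro ballI)
  have to_V: "\<exists>b\<in>V. (u, b) \<in> S\<^sup>*" if "u \<in> insert x V" for u
    using that out_of by (auto dest: trancl_into_rtrancl)
  have from_V: "\<exists>a\<in>V. (a, v) \<in> S\<^sup>*" if "v \<in> insert x V" for v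
    using that into by (auto dest: trancl_into_rtrancl)
  fix u v assume "u \<in> insert x V" "v \<in> insert x V"
  then obtain b a where "b \<in> V" "(u, b) \<in> S\<^sup>*" "a \<in> V" "(a, v) \<in> S\<^sup>*"
    using to_V from_V by blast
  moreover have "(b, a) \<in> S\<^sup>*"
    using conn \<open>a \<in> V\<close> \<open>b \<in> V\<close> unfolding strongly_connected_iff_rtrancl by blast
  ultimately show "(u, v) \<in> S\<^sup>*"
    by (meson rtrancl_trans)
qed

lemma
  assumes "orientation V E A"
  shows orientation_arcs_subset: "A \<subseteq> V \<times> V"
    and orientation_arc_edge: "(u, v) \<in> A \<Longrightarrow> {u, v} \<in> E"
    and orientation_edge_ex1: "e \<in> E \<Longrightarrow> \<exists>!p. p \<in> A \<and> {fst p, snd p} = e"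
  using assms unfolding orientation_def by auto

lemma orientation_edge_subset:
  assumes "orientation V E A" and "e \<in> E"
  shows "e \<subseteq> V"
proof -
  obtain p where "p \<in> A" "{fst p, snd p} = e"
    using orientation_edge_ex1[OF assms] by blast
  with orientation_arcs_subset[OF assms(1)] show ?thesis
    by auto
qed

lemma orientation_antisym:
  assumes "orientation V E A" and "(u, v) \<in> A" and "(v, u) \<in> A"
  shows "u = v"
proof -
  have "\<exists>!p. p \<in> A \<and> {fst p, snd p} = {u, v}"
    using orientation_edge_ex1[OF assms(1) orientation_arc_edge[OF assms(1,2)]] .
  then obtain p where unique: "\<And>q. q \<in> A \<Longrightarrow> {fst q, snd q} = {u, v} \<Longrightarrow> q = p"
    by blast
  have "(v, u) = p"
    by (rule unique[OF assms(3)]) auto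
  moreover have "(u, v) = p"
    by (rule unique[OF assms(2)]) simp
  ultimately have "(v, u) = (u, v)"
    by (rule trans[OF _ sym])
  then show ?thesis by blast
qed

lemma orientation_remove_edges:
  assumes "orientation V E A"
  shows "orientation V (E - R) {(u, v) \<in> A. {u, v} \<notin> R}"
  unfolding orientation_def
proof (intro conjI)
  show "{(u, v) \<in> A. {u, v} \<notin> R} \<subseteq> V \<times> V"
    and "\<forall>(u, v)\<in>{(u, v) \<in> A. {u, v} \<notin> R}. {u, v} \<in> E - R"
    using assms unfolding orientation_def by auto
  show "\<forall>e\<in>E - R. \<exists>!p. p \<in> {(u, v) \<in> A. {u, v} \<notin> R} \<and> {fst p, snd p} = e"
    using assms unfolding orientation_def by (auto simp: split_beta)
qed

lemma ex1_in_Un: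
  assumes "\<exists>!p. p \<in> A \<and> P p" and "\<And>q. q \<in> A \<union> B \<Longrightarrow> P q \<Longrightarrow> q \<in> A"
  shows "\<exists>!p. p \<in> A \<union> B \<and> P p"
  using assms by blast

lemma orientation_Un:
  assumes A: "orientation V E A" and B: "orientation W F B" and disjoint: "E \<inter> F = {}"
  shows "orientation (V \<union> W) (E \<union> F) (A \<union> B)"
  unfolding orientation_def
proof (intro conjI)
  show "A \<union> B \<subseteq> (V \<union> W) \<times> (V \<union> W)"
    using orientation_arcs_subset[OF A] orientation_arcs_subset[OF B] by blast
  show "\<forall>(u, v)\<in>A \<union> B. {u, v} \<in> E \<union> F"
    using orientation_arc_edge[OF A] orientation_arc_edge[OF B] by blast
  show "\<forall>e\<in>E \<union> F. \<exists>!p. p \<in> A \<union> B \<and> {fst p, snd p} = e"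
  proof
    fix e assume "e \<in> E \<union> F"
    then show "\<exists>!p. p \<in> A \<union> B \<and> {fst p, snd p} = e"
    proof
      assume "e \<in> E"
      have "q \<in> A" if "q \<in> A \<union> B" "{fst q, snd q} = e" for q
        using that \<open>e \<in> E\<close> disjoint orientation_arc_edge[OF B, of "fst q" "snd q"] by auto
      then show ?thesis
        by (rule ex1_in_Un[OF orientation_edge_ex1[OF A \<open>e \<in> E\<close>]])
    next
      assume "e \<in> F"
      have "q \<in> B" if "q \<in> B \<union> A" "{fst q, snd q} = e" for q
        using that \<open>e \<in> F\<close> disjoint orientation_arc_edge[OF A, of "fst q" "snd q"] by auto
      then have "\<exists>!p. p \<in> B \<union> A \<and> {fst p, snd p} = e"
        by (rule ex1_in_Un[OF orientation_edge_ex1[OF B \<open>e \<in> F\<close>]])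
      then show ?thesis
        by (simp only: Un_commute)
    qed
  qed
qed

lemma orientation_of_arcs:
  assumes "N \<subseteq> V \<times> V"
    and "\<And>p q. p \<in> N \<Longrightarrow> q \<in> N \<Longrightarrow> {fst p, snd p} = {fst q, snd q} \<Longrightarrow> p = q"
  shows "orientation V ((\<lambda>(u, v). {u, v}) ` N) N"
  using assms unfolding orientation_def by (auto simp: split_beta)

lemma orientation_restrict_orient:
  assumes "orientation V E A"
  shows "orientation V (E - {e}) (restrict_orient A e)"
proof -
  have "restrict_orient A e = {(u, v) \<in> A. {u, v} \<notin> {e}}"
    unfolding restrict_orient_def by simp
  with orientation_remove_edges[OF assms, of "{e}"] show ?thesis by simp
qed

lemma deletable_strongly_connected:
  "deletable V E A e \<Longrightarrow> strongly_connected V (restrict_orient A e)"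
  unfolding deletable_def strong_orientation_iff by blast

lemma in_deletable_setI:
  assumes "orientation V E A" and "e \<in> E" and "strongly_connected V (restrict_orient A e)"
  shows "e \<in> deletable_set V E A"
  using assms orientation_restrict_orient
  unfolding deletable_set_def deletable_def strong_orientation_iff by blast

lemma simple_graph_edge_distinct:
  assumes "simple_graph V E" and "{u, v} \<in> E"
  shows "u \<noteq> v"
proof -
  obtain a b where "a \<noteq> b" "{u, v} = {a, b}"
    using assms unfolding simple_graph_def by blast
  then show ?thesis by (auto simp: doubleton_eq_iff)
qed

locale bridged_pair =
  fixes V :: "'a set" and E :: "'a set set" and A :: "('a \<times> 'a) set"
    and u1 v1 u2 v2 x1 x2 :: 'a
  assumes orient: "orientation V E A"
    and arc1: "(u1, v1) \<in> A" and arc2: "(u2, v2) \<in> A"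
    and loopless: "u1 \<noteq> v1" "u2 \<noteq> v2"
    and fresh: "x1 \<notin> V" "x2 \<notin> V" "x1 \<noteq> x2"
begin

abbreviation "new_arcs \<equiv> {(u1, x1), (x1, v1), (x1, x2), (u2, x2), (x2, v2)}"

abbreviation "V' \<equiv> V \<union> {x1, x2}"

abbreviation "E' \<equiv> (E - {{u1, v1}, {u2, v2}}) \<union> {{u1, x1}, {x1, v1}, {x1, x2}, {u2, x2}, {x2, v2}}"

abbreviation "A' \<equiv> (A - {(u1, v1), (u2, v2)}) \<union> new_arcs"

lemma endpoints_in_V: "u1 \<in> V" "v1 \<in> V" "u2 \<in> V" "v2 \<in> V"
  using orientation_arcs_subset[OF orient] arc1 arc2 by auto

lemma orientation_new_arcs:
  "orientation {u1, v1, u2, v2, x1, x2} {{u1, x1}, {x1, v1}, {x1, x2}, {u2, x2}, {x2, v2}} new_arcs"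
proof -
  have "orientation {u1, v1, u2, v2, x1, x2} ((\<lambda>(u, v). {u, v}) ` new_arcs) new_arcs"
    using fresh loopless endpoints_in_V
    by (intro orientation_of_arcs) (auto simp: doubleton_eq_iff)
  then show ?thesis by simp
qed

lemma orientation_bridged: "orientation V' E' A'"
proof -
  have "(v1, u1) \<notin> A" "(v2, u2) \<notin> A"
    using orientation_antisym[OF orient _ arc1] orientation_antisym[OF orient _ arc2] loopless
    by auto
  then have "{(u, v) \<in> A. {u, v} \<notin> {{u1, v1}, {u2, v2}}} = A - {(u1, v1), (u2, v2)}"
    by (auto simp: doubleton_eq_iff)
  then have old: "orientation V (E - {{u1, v1}, {u2, v2}}) (A - {(u1, v1), (u2, v2)})"
    using orientation_remove_edges[OF orient, of "{{u1, v1}, {u2, v2}}"] by (simp only:)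
  have "(E - {{u1, v1}, {u2, v2}}) \<inter> {{u1, x1}, {x1, v1}, {x1, x2}, {u2, x2}, {x2, v2}} = {}"
    using orientation_edge_subset[OF orient] fresh by blast
  moreover have "V \<union> {u1, v1, u2, v2, x1, x2} = V'"
    using endpoints_in_V by auto
  ultimately show ?thesis
    using orientation_Un[OF old orientation_new_arcs] by (simp only:)
qed

lemma fresh_distinct:
  "x1 \<noteq> x2" "x1 \<noteq> u1" "x1 \<noteq> v1" "x1 \<noteq> u2" "x1 \<noteq> v2"
  "x2 \<noteq> u1" "x2 \<noteq> v1" "x2 \<noteq> u2" "x2 \<noteq> v2"
  using fresh endpoints_in_V by auto

lemma strongly_connected_bridgedI:
  assumes "strongly_connected V S"
    and "a1 \<in> V" "(a1, x1) \<in> S\<^sup>+" "b1 \<in> V" "(x1, b1) \<in> S\<^sup>+"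
    and "a2 \<in> V" "(a2, x2) \<in> S\<^sup>+" "b2 \<in> V" "(x2, b2) \<in> S\<^sup>+"
  shows "strongly_connected V' S"
proof -
  have "strongly_connected (insert x2 V) S"
    by (rule strongly_connected_insert[OF assms(1,6-9)])
  then have "strongly_connected (insert x1 (insert x2 V)) S"
    by (rule strongly_connected_insert) (use assms(2-5) in simp_all)
  then show ?thesis by simp
qed

lemma strong_orientation_bridged:
  assumes "strongly_connected V A"
  shows "strong_orientation V' E' A'"
proof -
  have new: "(u1, x1) \<in> A'" "(x1, v1) \<in> A'" "(u2, x2) \<in> A'" "(x2, v2) \<in> A'"
    by simp_all
  have "{(u1, v1), (u2, v2)} \<subseteq> A'\<^sup>+"
    using r_r_into_trancl[OF new(1,2)] r_r_into_trancl[OF new(3,4)] by blast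
  then have "A \<subseteq> A'\<^sup>+"
    by (rule subset_trancl_by_detours[rotated]) simp
  from strongly_connected_mono[OF assms this] have "strongly_connected V' A'"
    by (rule strongly_connected_bridgedI[OF _
          endpoints_in_V(1) r_into_trancl[OF new(1)] endpoints_in_V(2) r_into_trancl[OF new(2)]
          endpoints_in_V(3) r_into_trancl[OF new(3)] endpoints_in_V(4) r_into_trancl[OF new(4)]])
  with orientation_bridged show ?thesis
    unfolding strong_orientation_iff ..
qed

lemma old_arc_in_restrict:
  assumes "p \<in> A" "p \<notin> {(u1, v1), (u2, v2)}" "{fst p, snd p} \<noteq> e"
  shows "p \<in> restrict_orient A' e"
  using assms unfolding restrict_orient_def by (cases p) auto

lemma old_arc_edge_avoids_fresh:
  assumes "p \<in> A" and "x1 \<in> e \<or> x2 \<in> e"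
  shows "{fst p, snd p} \<noteq> e"
  using assms orientation_arcs_subset[OF orient] fresh by auto

lemma deletable_old_edge_bridged:
  assumes "e \<in> deletable_set V E A" and "e \<notin> {{u1, v1}, {u2, v2}}"
  shows "e \<in> deletable_set V' E' A'"
proof -
  let ?S = "restrict_orient A' e"
  have e: "e \<in> E" "deletable V E A e"
    using assms(1) unfolding deletable_set_def by auto
  have "x1 \<notin> e" "x2 \<notin> e"
    using orientation_edge_subset[OF orient e(1)] fresh by auto
  then have new: "(u1, x1) \<in> ?S" "(x1, v1) \<in> ?S" "(u2, x2) \<in> ?S" "(x2, v2) \<in> ?S"
    unfolding restrict_orient_def by auto
  have "{(u1, v1), (u2, v2)} \<subseteq> ?S\<^sup>+"
    using r_r_into_trancl[OF new(1,2)] r_r_into_trancl[OF new(3,4)] by blast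
  then have "restrict_orient A e \<subseteq> ?S\<^sup>+"
  proof (rule subset_trancl_by_detours[rotated])
    fix p assume "p \<in> restrict_orient A e" "p \<notin> {(u1, v1), (u2, v2)}"
    then show "p \<in> ?S"
      unfolding restrict_orient_def by auto
  qed
  from strongly_connected_mono[OF deletable_strongly_connected[OF e(2)] this]
  have "strongly_connected V' ?S"
    by (rule strongly_connected_bridgedI[OF _
          endpoints_in_V(1) r_into_trancl[OF new(1)] endpoints_in_V(2) r_into_trancl[OF new(2)]
          endpoints_in_V(3) r_into_trancl[OF new(3)] endpoints_in_V(4) r_into_trancl[OF new(4)]])
  moreover have "e \<in> E'"
    using e(1) assms(2) by blast
  ultimately show ?thesis
    by (intro in_deletable_setI[OF orientation_bridged])
qed

lemma deletable_x1_v1_bridged: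
  assumes "deletable V E A {u1, v1}"
  shows "{x1, v1} \<in> deletable_set V' E' A'"
proof -
  let ?S = "restrict_orient A' {x1, v1}"
  have new: "(u1, x1) \<in> ?S" "(x1, x2) \<in> ?S" "(u2, x2) \<in> ?S" "(x2, v2) \<in> ?S"
    using fresh_distinct loopless unfolding restrict_orient_def by (auto simp: doubleton_eq_iff)
  have "{(u2, v2)} \<subseteq> ?S\<^sup>+"
    using r_r_into_trancl[OF new(3,4)] by simp
  then have "restrict_orient A {u1, v1} \<subseteq> ?S\<^sup>+"
  proof (rule subset_trancl_by_detours[rotated])
    fix p assume "p \<in> restrict_orient A {u1, v1}" "p \<notin> {(u2, v2)}"
    then show "p \<in> ?S"
      by (intro old_arc_in_restrict old_arc_edge_avoids_fresh) (auto simp: restrict_orient_def)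
  qed
  from strongly_connected_mono[OF deletable_strongly_connected[OF assms] this]
  have "strongly_connected V' ?S"
    by (rule strongly_connected_bridgedI[OF _
          endpoints_in_V(1) r_into_trancl[OF new(1)] endpoints_in_V(4) r_r_into_trancl[OF new(2,4)]
          endpoints_in_V(3) r_into_trancl[OF new(3)] endpoints_in_V(4) r_into_trancl[OF new(4)]])
  then show ?thesis
    by (intro in_deletable_setI[OF orientation_bridged]) simp_all
qed

lemma deletable_x1_x2_bridged:
  assumes "strongly_connected V A"
  shows "{x1, x2} \<in> deletable_set V' E' A'"
proof -
  let ?S = "restrict_orient A' {x1, x2}"
  have new: "(u1, x1) \<in> ?S" "(x1, v1) \<in> ?S" "(u2, x2) \<in> ?S" "(x2, v2) \<in> ?S"
    using fresh_distinct unfolding restrict_orient_def by (auto simp: doubleton_eq_iff)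
  have "{(u1, v1), (u2, v2)} \<subseteq> ?S\<^sup>+"
    using r_r_into_trancl[OF new(1,2)] r_r_into_trancl[OF new(3,4)] by simp
  then have "A \<subseteq> ?S\<^sup>+"
  proof (rule subset_trancl_by_detours[rotated])
    fix p assume "p \<in> A" "p \<notin> {(u1, v1), (u2, v2)}"
    then show "p \<in> ?S"
      by (intro old_arc_in_restrict old_arc_edge_avoids_fresh) simp_all
  qed
  from strongly_connected_mono[OF assms this]
  have "strongly_connected V' ?S"
    by (rule strongly_connected_bridgedI[OF _
          endpoints_in_V(1) r_into_trancl[OF new(1)] endpoints_in_V(2) r_into_trancl[OF new(2)]
          endpoints_in_V(3) r_into_trancl[OF new(3)] endpoints_in_V(4) r_into_trancl[OF new(4)]])
  then show ?thesis
    by (intro in_deletable_setI[OF orientation_bridged]) simp_all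
qed

lemma deletable_u2_x2_bridged:
  assumes "deletable V E A {u2, v2}"
  shows "{u2, x2} \<in> deletable_set V' E' A'"
proof -
  let ?S = "restrict_orient A' {u2, x2}"
  have new: "(u1, x1) \<in> ?S" "(x1, v1) \<in> ?S" "(x1, x2) \<in> ?S" "(x2, v2) \<in> ?S"
    using fresh_distinct loopless unfolding restrict_orient_def by (auto simp: doubleton_eq_iff)
  have "{(u1, v1)} \<subseteq> ?S\<^sup>+"
    using r_r_into_trancl[OF new(1,2)] by simp
  then have "restrict_orient A {u2, v2} \<subseteq> ?S\<^sup>+"
  proof (rule subset_trancl_by_detours[rotated])
    fix p assume "p \<in> restrict_orient A {u2, v2}" "p \<notin> {(u1, v1)}"
    then show "p \<in> ?S"
      by (intro old_arc_in_restrict old_arc_edge_avoids_fresh) (auto simp: restrict_orient_def)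
  qed
  from strongly_connected_mono[OF deletable_strongly_connected[OF assms] this]
  have "strongly_connected V' ?S"
    by (rule strongly_connected_bridgedI[OF _
          endpoints_in_V(1) r_into_trancl[OF new(1)] endpoints_in_V(2) r_into_trancl[OF new(2)]
          endpoints_in_V(1) r_r_into_trancl[OF new(1,3)] endpoints_in_V(4) r_into_trancl[OF new(4)]])
  then show ?thesis
    by (intro in_deletable_setI[OF orientation_bridged]) simp_all
qed

end

theorem mainTheorem7:
  fixes V :: "'a set" and E :: "'a set set" and A :: "('a \<times> 'a) set"
    and u1 v1 u2 v2 x1 x2 :: 'a
  assumes cubic: "cubic_graph V E"
    and strong: "strong_orientation V E A"
    and e1: "{u1, v1} \<in> E" and e2: "{u2, v2} \<in> E"
    and nonadj: "{u1, v1} \<inter> {u2, v2} = {}"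
    and o1: "(u1, v1) \<in> A" and o2: "(u2, v2) \<in> A"
    and del1: "deletable V E A {u1, v1}" and del2: "deletable V E A {u2, v2}"
    and new: "x1 \<notin> V" "x2 \<notin> V" "x1 \<noteq> x2"
  shows "strong_orientation (V \<union> {x1, x2})
           ((E - {{u1, v1}, {u2, v2}}) \<union> {{u1, x1}, {x1, v1}, {x1, x2}, {u2, x2}, {x2, v2}})
           ((A - {(u1, v1), (u2, v2)}) \<union> {(u1, x1), (x1, v1), (x1, x2), (u2, x2), (x2, v2)})
       \<and> (deletable_set V E A - {{u1, v1}, {u2, v2}}) \<union> {{x1, v1}, {x1, x2}, {u2, x2}}
           \<subseteq> deletable_set (V \<union> {x1, x2})
               ((E - {{u1, v1}, {u2, v2}}) \<union> {{u1, x1}, {x1, v1}, {x1, x2}, {u2, x2}, {x2, v2}})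
               ((A - {(u1, v1), (u2, v2)}) \<union> {(u1, x1), (x1, v1), (x1, x2), (u2, x2), (x2, v2)})"
proof -
  have "simple_graph V E"
    using cubic unfolding cubic_graph_def by blast
  then interpret bridged_pair V E A u1 v1 u2 v2 x1 x2
    using strong o1 o2 e1 e2 new
    by unfold_locales (auto simp: strong_orientation_iff dest: simple_graph_edge_distinct)
  have conn: "strongly_connected V A"
    using strong unfolding strong_orientation_iff by blast
  show ?thesis
  proof
    show "strong_orientation V' E' A'"
      by (rule strong_orientation_bridged[OF conn])
    show "(deletable_set V E A - {{u1, v1}, {u2, v2}}) \<union> {{x1, v1}, {x1, x2}, {u2, x2}}
      \<subseteq> deletable_set V' E' A'"
    proof (rule Un_least)
      show "deletable_set V E A - {{u1, v1}, {u2, v2}} \<subseteq> deletable_set V' E' A'"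
        by (rule subsetI, erule DiffE, rule deletable_old_edge_bridged)
      show "{{x1, v1}, {x1, x2}, {u2, x2}} \<subseteq> deletable_set V' E' A'"
        using deletable_x1_v1_bridged[OF del1] deletable_x1_x2_bridged[OF conn]
          deletable_u2_x2_bridged[OF del2]
        by (simp only: insert_subset empty_subsetI simp_thms)
    qed
  qed
qed

end
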